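(* Let $K$ be a non-archimedean local field. A non-elementary subgroup $G$ of $\mathrm{SL}_2(K)$ is discrete if and only if every subgroup of $G$ generated by two elements is discrete.
   Context: A non-archimedean local field is a finite extension of $\mathbb{Q}_p$ or $\mathbb{F}_q((t))$. $\mathrm{SL}_2(K)$ has the subspace topology from $K^4$ and acts by isometries on its Bruhat–Tits tree $T_K$. A subgroup is elementary if it stabilises a vertex, an end, or a pair of ends of $T_K$, and non-elementary otherwise. *)

theory Defs
  imports "HOL-Analysis.Analysis"
begin

text \<open>A normalised discrete valuation on a field, given on nonzero elements
  (its value at 0 is irrelevant and never used).\<close>
definition discrete_valuation :: "('k::field \<Rightarrow> int) \<Rightarrow> bool" where
  "discrete_valuation v \<longleftrightarrow>
     (\<forall>x y. x \<noteq> 0 \<longrightarrow> y \<noteq> 0 \<longrightarrow> v (x * y) = v x + v y) \<and>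
     (\<forall>x y. x \<noteq> 0 \<longrightarrow> y \<noteq> 0 \<longrightarrow> x + y \<noteq> 0 \<longrightarrow> v (x + y) \<ge> min (v x) (v y)) \<and>
     (\<forall>n. \<exists>x. x \<noteq> 0 \<and> v x = n)"

definition vclose :: "('k::field \<Rightarrow> int) \<Rightarrow> int \<Rightarrow> 'k \<Rightarrow> 'k \<Rightarrow> bool" where
  "vclose v n x y \<longleftrightarrow> x = y \<or> v (x - y) \<ge> n"

definition val_complete :: "('k::field \<Rightarrow> int) \<Rightarrow> bool" where
  "val_complete v \<longleftrightarrow>
     (\<forall>s :: nat \<Rightarrow> 'k.
        (\<forall>n. \<exists>N. \<forall>m\<ge>N. \<forall>m'\<ge>N. vclose v n (s m) (s m')) \<longrightarrow>
        (\<exists>L. \<forall>n. \<exists>N. \<forall>m\<ge>N. vclose v n (s m) L))"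

definition val_ring :: "('k::field \<Rightarrow> int) \<Rightarrow> 'k set" where
  "val_ring v = {x. x = 0 \<or> v x \<ge> 0}"

definition finite_residue_field :: "('k::field \<Rightarrow> int) \<Rightarrow> bool" where
  "finite_residue_field v \<longleftrightarrow>
     (\<exists>R. finite R \<and> R \<subseteq> val_ring v \<and> (\<forall>x\<in>val_ring v. \<exists>r\<in>R. vclose v 1 x r))"

definition nonarch_local_field :: "('k::field \<Rightarrow> int) \<Rightarrow> bool" where
  "nonarch_local_field v \<longleftrightarrow>
     discrete_valuation v \<and> val_complete v \<and> finite_residue_field v"

definition SL2 :: "('k::field^2^2) set" where
  "SL2 = {A. det A = 1}"

definition sl2_subgroup :: "('k::field^2^2) set \<Rightarrow> bool" where
  "sl2_subgroup G \<longleftrightarrow> G \<subseteq> SL2 \<and> mat 1 \<in> G \<and>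
     (\<forall>g\<in>G. \<forall>h\<in>G. g ** h \<in> G) \<and>
     (\<forall>g\<in>G. \<exists>h\<in>G. g ** h = mat 1 \<and> h ** g = mat 1)"

definition gen_subgroup :: "('k::field^2^2) set \<Rightarrow> ('k^2^2) set" where
  "gen_subgroup S = \<Inter>{H. sl2_subgroup H \<and> S \<subseteq> H}"

text \<open>Discreteness for the subspace topology from K^4: each element of G has a
  basic (product-of-balls) neighbourhood containing no other element of G.\<close>
definition mclose :: "('k::field \<Rightarrow> int) \<Rightarrow> int \<Rightarrow> 'k^2^2 \<Rightarrow> 'k^2^2 \<Rightarrow> bool" where
  "mclose v n A B \<longleftrightarrow> (\<forall>i j. vclose v n (A $ i $ j) (B $ i $ j))"

definition discrete_subgroup :: "('k::field \<Rightarrow> int) \<Rightarrow> ('k^2^2) set \<Rightarrow> bool" where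
  "discrete_subgroup v G \<longleftrightarrow> (\<forall>g\<in>G. \<exists>n. \<forall>h\<in>G. mclose v n h g \<longrightarrow> h = g)"

definition lattice :: "('k::field \<Rightarrow> int) \<Rightarrow> ('k^2) set \<Rightarrow> bool" where
  "lattice v L \<longleftrightarrow> (\<exists>e f :: 'k^2. e $ 1 * f $ 2 - e $ 2 * f $ 1 \<noteq> 0 \<and>
     L = {a *s e + b *s f | a b. a \<in> val_ring v \<and> b \<in> val_ring v})"

text \<open>Vertices of T_K are homothety classes of lattices; we work with representatives.\<close>
definition homothetic :: "('k::field^2) set \<Rightarrow> ('k^2) set \<Rightarrow> bool" where
  "homothetic L M \<longleftrightarrow> (\<exists>c. c \<noteq> 0 \<and> M = (\<lambda>x. c *s x) ` L)"

definition adjacent :: "('k::field \<Rightarrow> int) \<Rightarrow> ('k^2) set \<Rightarrow> ('k^2) set \<Rightarrow> bool" where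
  "adjacent v L M \<longleftrightarrow> lattice v L \<and> lattice v M \<and>
     (\<exists>M' p. homothetic M M' \<and> p \<noteq> 0 \<and> v p = 1 \<and>
        (\<lambda>x. p *s x) ` L \<subset> M' \<and> M' \<subset> L)"

definition act :: "'k::field^2^2 \<Rightarrow> ('k^2) set \<Rightarrow> ('k^2) set" where
  "act g L = (\<lambda>x. g *v x) ` L"

definition ray :: "('k::field \<Rightarrow> int) \<Rightarrow> (nat \<Rightarrow> ('k^2) set) \<Rightarrow> bool" where
  "ray v r \<longleftrightarrow> (\<forall>n. adjacent v (r n) (r (Suc n)) \<and> \<not> homothetic (r n) (r (Suc (Suc n))))"

definition same_end :: "(nat \<Rightarrow> ('k::field^2) set) \<Rightarrow> (nat \<Rightarrow> ('k^2) set) \<Rightarrow> bool" where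
  "same_end r s \<longleftrightarrow> (\<exists>a b. \<forall>n. homothetic (r (n + a)) (s (n + b)))"

definition stabilises_vertex :: "('k::field \<Rightarrow> int) \<Rightarrow> ('k^2^2) set \<Rightarrow> bool" where
  "stabilises_vertex v G \<longleftrightarrow> (\<exists>L. lattice v L \<and> (\<forall>g\<in>G. homothetic (act g L) L))"

definition stabilises_end :: "('k::field \<Rightarrow> int) \<Rightarrow> ('k^2^2) set \<Rightarrow> bool" where
  "stabilises_end v G \<longleftrightarrow> (\<exists>r. ray v r \<and> (\<forall>g\<in>G. same_end (\<lambda>n. act g (r n)) r))"

definition stabilises_end_pair :: "('k::field \<Rightarrow> int) \<Rightarrow> ('k^2^2) set \<Rightarrow> bool" where
  "stabilises_end_pair v G \<longleftrightarrow> (\<exists>r s. ray v r \<and> ray v s \<and> \<not> same_end r s \<and>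
     (\<forall>g\<in>G. (same_end (\<lambda>n. act g (r n)) r \<and> same_end (\<lambda>n. act g (s n)) s) \<or>
            (same_end (\<lambda>n. act g (r n)) s \<and> same_end (\<lambda>n. act g (s n)) r)))"

definition elementary :: "('k::field \<Rightarrow> int) \<Rightarrow> ('k^2^2) set \<Rightarrow> bool" where
  "elementary v G \<longleftrightarrow> stabilises_vertex v G \<or> stabilises_end v G \<or> stabilises_end_pair v G"

end

theory Submission
  imports Defs "HOL-Computational_Algebra.Primes"
begin

(* Suppose every cyclic subgroup of G is discrete but G is not. As the residue field is finite,
   some positive integer m lies in the maximal ideal, so for x congruent to 1 the powers x^(m^k)
   converge to 1, and discreteness of the cyclic group generated by x forces x^(m^k) = 1.

   If m is nonzero in K, the binomial expansion of (1 + Y)^m is dominated by its linear term m Y,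
   so an element of m-power order that is close enough to 1 equals 1: G is discrete after all.

   Otherwise K has characteristic p, and (x - 1)^(p^k) = x^(p^k) - 1 = 0 makes every x in G close
   to 1 unipotent. Products of such elements are again unipotent; comparing traces shows that they
   all fix a common vector e. Conjugation preserves closeness to 1 up to a bounded loss, so G
   preserves the line K e and therefore fixes the end of the Bruhat-Tits tree it defines: G is
   elementary. *)

section \<open>2 x 2 matrices\<close>

lemma vec2_eq_iff: "(x::'a^2) = y \<longleftrightarrow> x$1 = y$1 \<and> x$2 = y$2"
  unfolding vec_eq_iff forall_2 by auto

lemma mat2_eq_iff:
  "(A::'a^2^2) = B \<longleftrightarrow> A$1$1 = B$1$1 \<and> A$1$2 = B$1$2 \<and> A$2$1 = B$2$1 \<and> A$2$2 = B$2$2"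
  unfolding vec_eq_iff forall_2 by auto

lemma matrix_mult_2: "((A::'a::comm_ring_1^2^2) ** B)$i$j = A$i$1 * B$1$j + A$i$2 * B$2$j"
  by (simp add: matrix_matrix_mult_def sum_2)

lemma matrix_vector_mult_2: "((A::'a::comm_ring_1^2^2) *v x)$i = A$i$1 * x$1 + A$i$2 * x$2"
  by (simp add: matrix_vector_mult_def sum_2)

lemma mat_2: "(mat c :: 'a::zero^2^2)$1$1 = c" "(mat c :: 'a^2^2)$2$2 = c"
  "(mat c :: 'a^2^2)$1$2 = 0" "(mat c :: 'a^2^2)$2$1 = 0"
  by (simp_all add: mat_def)

lemma trace_2: "trace (A::'a::semiring_1^2^2) = A$1$1 + A$2$2"
  by (simp add: trace_def sum_2)

lemmas matrix2_simps = mat2_eq_iff vec2_eq_iff matrix_mult_2 matrix_vector_mult_2 mat_2 trace_2 det_2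

lemma matrix_add_rdistrib: "((A::'a::semiring_1^'n^'m) + B) ** C = A ** C + B ** C"
  by (vector matrix_matrix_mult_def sum.distrib[symmetric] algebra_simps)

lemma matrix_diff_rdistrib: "((A::'a::ring_1^'n^'m) - B) ** C = A ** C - B ** C"
  by (vector matrix_matrix_mult_def sum_subtractf[symmetric] algebra_simps)

lemma matrix_diff_ldistrib: "(A::'a::ring_1^'n^'m) ** (B - C) = A ** B - A ** C"
  by (vector matrix_matrix_mult_def sum_subtractf[symmetric] algebra_simps)

lemma product_minus_one:
  "x ** y - mat 1 = (x - mat 1) + (y - mat 1) + (x - mat 1) ** (y - mat 1 :: 'a::ring_1^'n^'n)"
  by (simp add: matrix_diff_ldistrib matrix_diff_rdistrib)

lemma conjugate_minus_one:
  "h ** g = mat 1 \<Longrightarrow> h ** x ** g - mat 1 = h ** (x - mat 1) ** (g :: 'a::ring_1^'n^'n)"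
  by (simp add: matrix_diff_ldistrib matrix_diff_rdistrib matrix_mul_assoc)

lemma matrix_sum_rdistrib:
  "finite S \<Longrightarrow> (\<Sum>k\<in>S. f k :: 'a::semiring_1^'n^'m) ** C = (\<Sum>k\<in>S. f k ** C)"
  by (induction S rule: finite_induct) (simp_all add: matrix_add_rdistrib)

lemma mat_add: "mat (a + b) = (mat a + mat b :: 'a::monoid_add^'n^'n)"
  by (vector mat_def)

lemma mat_mult_component: "(mat c ** (A::'a::semiring_1^'n^'m))$i$j = c * A$i$j"
  by (simp add: matrix_matrix_mult_def mat_def if_distrib if_distribR sum.delta cong: if_cong)

fun matpow :: "'a::semiring_1^'n^'n \<Rightarrow> nat \<Rightarrow> 'a^'n^'n" where
  "matpow A 0 = mat 1"
| "matpow A (Suc n) = matpow A n ** A"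

lemma matpow_add: "matpow A (m + n) = matpow A m ** matpow A n"
  by (induction n) (simp_all add: matrix_mul_assoc)

lemma matpow_commute: "matpow A n ** A = A ** matpow A n"
  by (induction n) (simp_all, metis matrix_mul_assoc)

lemma matpow_mult: "matpow A (m * n) = matpow (matpow A m) n"
  by (induction n) (simp_all add: matpow_add matpow_commute)

lemma det_matpow: "det (matpow (A::'a::comm_ring_1^'n^'n) n) = det A ^ n"
  by (induction n) (simp_all add: det_mul)

lemma matpow_one_plus_binomial:
  "matpow (mat 1 + Y) n = (\<Sum>k\<le>n. mat (of_nat (n choose k)) ** matpow (Y::'a::semiring_1^'n^'n) k)"
proof (induction n)
  case (Suc n)
  define c where "c k = mat (of_nat (n choose k)) ** matpow Y k" for k
  have "matpow (mat 1 + Y) (Suc n) = (\<Sum>k\<le>n. c k) + (\<Sum>k\<le>n. c k ** Y)"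
    by (simp add: Suc c_def matrix_add_ldistrib matrix_sum_rdistrib)
  also have "(\<Sum>k\<le>n. c k) = (\<Sum>k\<le>Suc n. c k)"
    by (simp add: c_def binomial_eq_0)
  also have "\<dots> = mat 1 + (\<Sum>k\<le>n. mat (of_nat (n choose Suc k)) ** matpow Y (Suc k))"
    by (simp only: sum.atMost_Suc_shift) (simp add: c_def)
  also have "(\<Sum>k\<le>n. c k ** Y) = (\<Sum>k\<le>n. mat (of_nat (n choose k)) ** matpow Y (Suc k))"
    by (simp add: c_def matrix_mul_assoc)
  also have "mat 1 + (\<Sum>k\<le>n. mat (of_nat (n choose Suc k)) ** matpow Y (Suc k)) +
      (\<Sum>k\<le>n. mat (of_nat (n choose k)) ** matpow Y (Suc k)) =
      (\<Sum>k\<le>Suc n. mat (of_nat (Suc n choose k)) ** matpow Y k)"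
    by (subst sum.atMost_Suc_shift)
      (simp add: sum.distrib mat_add matrix_add_rdistrib ac_simps)
  finally show ?case .
qed simp

lemma matpow_one_plus_prime:
  fixes Y :: "'a::comm_ring_1^'n^'n"
  assumes "prime p" and "of_nat p = (0::'a)"
  shows "matpow (mat 1 + Y) p = mat 1 + matpow Y p"
proof -
  have "mat (of_nat (p choose k)) ** matpow Y k = 0" if "k \<notin> {0, p}" "k \<le> p" for k
  proof -
    have "p dvd (p choose k)"
      using that assms(1) by (intro dvd_choose_prime) auto
    then show ?thesis
      using assms(2) by (auto elim!: dvdE)
  qed
  then have "(\<Sum>k\<le>p. mat (of_nat (p choose k)) ** matpow Y k) =
             (\<Sum>k\<in>{0, p}. mat (of_nat (p choose k)) ** matpow Y k)"
    by (intro sum.mono_neutral_right) auto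
  then show ?thesis
    using prime_gt_0_nat[OF assms(1)] by (simp add: matpow_one_plus_binomial)
qed

lemma matpow_one_plus_prime_power:
  fixes Y :: "'a::comm_ring_1^'n^'n"
  assumes "prime p" and "of_nat p = (0::'a)"
  shows "matpow (mat 1 + Y) (p ^ k) = mat 1 + matpow Y (p ^ k)"
proof (induction k)
  case (Suc k)
  have "matpow (mat 1 + Y) (p ^ Suc k) = matpow (matpow (mat 1 + Y) (p ^ k)) p"
    by (simp add: matpow_mult[symmetric] mult.commute)
  also have "\<dots> = mat 1 + matpow (matpow Y (p ^ k)) p"
    by (simp add: Suc matpow_one_plus_prime[OF assms])
  finally show ?case
    by (simp add: matpow_mult[symmetric] mult.commute)
qed simp

definition det2 :: "'a::comm_ring_1^2 \<Rightarrow> 'a^2 \<Rightarrow> 'a" where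
  "det2 e f = e$1 * f$2 - e$2 * f$1"

lemma det2_smult_right: "det2 e (c *s f) = c * det2 e f"
  by (simp add: det2_def algebra_simps)

lemma det2_matrix_vector_mult: "det2 (g *v e) (g *v f) = det g * det2 e f"
  by (simp add: det2_def matrix2_simps algebra_simps)

lemma trace_det2: "trace A * det2 e f = det2 (A *v e) f + det2 e (A *v f)"
  by (simp add: det2_def matrix2_simps algebra_simps)

lemma det2_complement_exists:
  assumes "(e::'a::field^2) \<noteq> 0"
  obtains f where "det2 e f \<noteq> 0"
proof (cases "e$1 = 0")
  case True
  then show ?thesis
    using assms by (intro that[of "axis 1 1"]) (auto simp: det2_def axis_def vec2_eq_iff)
next
  case False
  then show ?thesis
    by (intro that[of "axis 2 1"]) (simp add: det2_def axis_def)
qed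

lemma det2_eq_0_imp_parallel:
  assumes "det2 e w = 0" and "(e::'a::field^2) \<noteq> 0"
  shows "\<exists>c. w = c *s e"
proof (cases "e$1 = 0")
  case True
  then have "e$2 \<noteq> 0" "w$1 = 0"
    using assms by (auto simp: det2_def vec2_eq_iff)
  then show ?thesis
    using True by (intro exI[of _ "w$2 / e$2"]) (simp add: vec2_eq_iff)
next
  case False
  then show ?thesis
    using assms(1) by (intro exI[of _ "w$1 / e$1"]) (simp add: det2_def vec2_eq_iff field_simps)
qed

lemma det2_nonzero_coords_unique:
  assumes "det2 e f \<noteq> 0" and "a *s e + b *s f = a' *s e + b' *s (f::'a::field^2)"
  shows "a = a'" and "b = b'"
proof -
  have eq: "(a - a') * e$1 + (b - b') * f$1 = 0" "(a - a') * e$2 + (b - b') * f$2 = 0"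
    using assms(2) by (auto simp: vec2_eq_iff algebra_simps)
  have "(a - a') * det2 e f =
        f$2 * ((a - a') * e$1 + (b - b') * f$1) - f$1 * ((a - a') * e$2 + (b - b') * f$2)"
    by (simp add: det2_def algebra_simps)
  then show "a = a'"
    using assms(1) unfolding eq by simp
  have "(b - b') * det2 e f =
        e$1 * ((a - a') * e$2 + (b - b') * f$2) - e$2 * ((a - a') * e$1 + (b - b') * f$1)"
    by (simp add: det2_def algebra_simps)
  then show "b = b'"
    using assms(1) unfolding eq by simp
qed

lemma det2_nonzero_spans:
  assumes "det2 e f \<noteq> 0"
  shows "\<exists>a b. w = a *s e + b *s (f::'a::field^2)"
proof -
  have "det2 e f *s w = det2 w f *s e + det2 e w *s f"
    by (simp add: det2_def vec2_eq_iff algebra_simps)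
  then have "w = (det2 w f / det2 e f) *s e + (det2 e w / det2 e f) *s f"
    using assms by (simp add: vec2_eq_iff field_simps)
  then show ?thesis
    by blast
qed

lemma cayley_hamilton_2: "(Y::'a::comm_ring_1^2^2) ** Y = mat (trace Y) ** Y - mat (det Y)"
  by (simp add: matrix2_simps algebra_simps)

lemma square_zero_trace:
  assumes "(Y::'a::field^2^2) ** Y = 0"
  shows "trace Y = 0"
proof -
  have "det Y * det Y = 0"
    using assms det_mul[of Y Y] by (simp add: det_2)
  then have "mat (trace Y) ** Y = 0"
    using assms cayley_hamilton_2[of Y] by simp
  then have "trace Y * Y$i$j = 0" for i j
    by (metis mat_mult_component zero_index)
  then show ?thesis
    using assms by (cases "Y = 0") (auto simp: vec_eq_iff trace_2)
qed

lemma matpow_nilpotent_imp_square_zero: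
  assumes "matpow (Y::'a::field^2^2) n = 0"
  shows "Y ** Y = 0"
proof (cases n)
  case 0
  then show ?thesis
    using assms by (simp add: matrix2_simps)
next
  case (Suc k)
  have "det Y ^ n = 0"
    using assms det_matpow[of Y n] by (simp add: det_2)
  then have "det Y = 0"
    by simp
  then have YY: "Y ** Y = mat (trace Y) ** Y"
    using Suc cayley_hamilton_2[of Y] by simp
  have "matpow Y (Suc j) = mat (trace Y ^ j) ** Y" for j
  proof (induction j)
    case (Suc j)
    then show ?case
      by (simp add: matrix_mul_assoc[symmetric] YY) (simp add: matrix2_simps mat_mult_component)
  qed simp
  then have "trace Y ^ k * Y$i$j = 0" for i j
    using assms Suc by (metis mat_mult_component zero_index)
  then have "trace Y = 0 \<or> Y = 0"
    by (auto simp: vec_eq_iff)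
  then show ?thesis
    using YY by auto
qed

lemma matrix_vanishing_on_basis:
  assumes "det2 e f \<noteq> 0" and "Y *v e = 0" and "Y *v f = 0"
  shows "(Y::'a::field^2^2) = 0"
proof -
  have "Y$i$1 * det2 e f = f$2 * (Y *v e)$i - e$2 * (Y *v f)$i"
       "Y$i$2 * det2 e f = e$1 * (Y *v f)$i - f$1 * (Y *v e)$i" for i
    by (simp_all add: det2_def matrix_vector_mult_2 algebra_simps)
  then have "Y$i$j = 0" for i j
    using assms exhaust_2[of j] by auto
  then show ?thesis
    by (simp add: vec_eq_iff)
qed

lemma kernel_parallel:
  assumes "(Y::'a::field^2^2) \<noteq> 0" and "Y *v e = 0" and "Y *v w = 0" and "e \<noteq> 0"
  shows "\<exists>c. w = c *s e"
  using assms matrix_vanishing_on_basis det2_eq_0_imp_parallel by metis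

lemma square_zero_kernel_exists:
  assumes "Y ** Y = 0" and "(Y::'a::field^2^2) \<noteq> 0"
  obtains e where "e \<noteq> 0" and "Y *v e = 0"
proof -
  obtain w where "Y *v w \<noteq> 0"
    using assms(2) matrix_eq[of Y 0] by auto
  moreover have "Y *v (Y *v w) = 0"
    using assms(1) by (simp add: matrix_vector_mul_assoc)
  ultimately show ?thesis
    by (rule that)
qed

lemma square_zero_common_kernel:
  fixes Y0 Y :: "'a::field^2^2"
  assumes "Y0 \<noteq> 0" and "Y0 ** Y0 = 0" and "Y0 *v e = 0"
    and "Y ** Y = 0" and "trace (Y ** Y0) = 0"
  shows "Y *v e = 0"
proof (cases "e = 0")
  case False
  obtain w where w: "det2 e w \<noteq> 0"
    using det2_complement_exists False by blast
  have "Y0 *v w \<noteq> 0"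
    using matrix_vanishing_on_basis[OF w assms(3)] assms(1) by blast
  moreover have "Y0 *v (Y0 *v w) = 0"
    using assms(2) by (simp add: matrix_vector_mul_assoc)
  ultimately obtain c where c: "Y0 *v w = c *s e" "c \<noteq> 0"
    using kernel_parallel[OF assms(1,3) _ False] by (metis vector_smult_lzero)
  \<comment> \<open>As Y0 kills e and maps w to c e, the trace of Y Y0 is c times the w-coordinate of Y e.\<close>
  have "trace (Y ** Y0) * det2 e w = det2 ((Y ** Y0) *v e) w + det2 e ((Y ** Y0) *v w)"
    by (rule trace_det2)
  also have "\<dots> = c * det2 e (Y *v e)"
    by (simp add: matrix_vector_mul_assoc[symmetric] assms(3) c vector_scalar_commute
        det2_def algebra_simps)
  finally have "det2 e (Y *v e) = 0"
    using assms(5) c(2) by simp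
  then obtain k where k: "Y *v e = k *s e"
    using det2_eq_0_imp_parallel False by blast
  have "(k * k) *s e = Y *v (Y *v e)"
    by (simp add: k vector_scalar_commute vector_smult_assoc)
  also have "\<dots> = 0"
    using assms(4) by (simp add: matrix_vector_mul_assoc)
  finally have "k = 0"
    using False by (auto simp: vec_eq_iff)
  then show ?thesis
    using k by simp
qed simp

definition unipotent :: "'a::comm_ring_1^2^2 \<Rightarrow> bool" where
  "unipotent x \<longleftrightarrow> (x - mat 1) ** (x - mat 1) = 0"

lemma unipotent_product_trace:
  fixes x0 x :: "'a::field^2^2"
  assumes "unipotent x0" and "unipotent x" and "unipotent (x0 ** x)"
  shows "trace ((x - mat 1) ** (x0 - mat 1)) = 0"
proof -
  have "trace (x0 ** x - mat 1) =
        trace (x0 - mat 1) + trace (x - mat 1) + trace ((x0 - mat 1) ** (x - mat 1))"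
    unfolding product_minus_one by (simp only: trace_add)
  then have "trace ((x0 - mat 1) ** (x - mat 1)) = 0"
    using assms by (simp add: unipotent_def square_zero_trace)
  then show ?thesis
    by (simp add: trace_mul_sym[of "x - mat 1"])
qed

lemma unipotent_common_fixed_vector:
  fixes x0 x :: "'a::field^2^2"
  assumes "x0 \<noteq> mat 1" and "unipotent x0" and "unipotent x" and "unipotent (x0 ** x)"
    and "(x0 - mat 1) *v e = 0"
  shows "(x - mat 1) *v e = 0"
proof (rule square_zero_common_kernel)
  show "x0 - mat 1 \<noteq> 0"
    using assms(1) by simp
  show "trace ((x - mat 1) ** (x0 - mat 1)) = 0"
    using assms(2-4) by (rule unipotent_product_trace)
  show "(x0 - mat 1) ** (x0 - mat 1) = 0" "(x - mat 1) ** (x - mat 1) = 0"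
    using assms(2,3) unfolding unipotent_def by auto
qed (fact assms(5))

lemma sl2_subgroup_one: "sl2_subgroup G \<Longrightarrow> mat 1 \<in> G"
  by (simp add: sl2_subgroup_def)

lemma sl2_subgroup_mult: "sl2_subgroup G \<Longrightarrow> g \<in> G \<Longrightarrow> h \<in> G \<Longrightarrow> g ** h \<in> G"
  by (simp add: sl2_subgroup_def)

lemma sl2_subgroup_inverse:
  "sl2_subgroup G \<Longrightarrow> g \<in> G \<Longrightarrow> \<exists>h\<in>G. g ** h = mat 1 \<and> h ** g = mat 1"
  by (simp add: sl2_subgroup_def)

lemma sl2_subgroup_det: "sl2_subgroup G \<Longrightarrow> g \<in> G \<Longrightarrow> det g = 1"
  by (auto simp: sl2_subgroup_def SL2_def)

lemma matpow_mem_sl2_subgroup: "sl2_subgroup G \<Longrightarrow> x \<in> G \<Longrightarrow> matpow x k \<in> G"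
  by (induction k) (simp_all add: sl2_subgroup_one sl2_subgroup_mult)

lemma one_mem_gen_subgroup: "mat 1 \<in> gen_subgroup S"
  unfolding gen_subgroup_def by (auto intro: sl2_subgroup_one)

lemma matpow_mem_gen_subgroup: "x \<in> S \<Longrightarrow> matpow x k \<in> gen_subgroup S"
  unfolding gen_subgroup_def by (auto intro: matpow_mem_sl2_subgroup)

lemma gen_subgroup_least: "sl2_subgroup G \<Longrightarrow> S \<subseteq> G \<Longrightarrow> gen_subgroup S \<subseteq> G"
  unfolding gen_subgroup_def by blast

lemma discrete_subgroup_subset: "discrete_subgroup v G \<Longrightarrow> H \<subseteq> G \<Longrightarrow> discrete_subgroup v H"
  unfolding discrete_subgroup_def by blast

section \<open>Discretely valued fields\<close>

locale discrete_valued_field =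
  fixes v :: "'k::field \<Rightarrow> int"
  assumes discrete_valuation: "discrete_valuation v"
begin

lemma val_mult: "x \<noteq> 0 \<Longrightarrow> y \<noteq> 0 \<Longrightarrow> v (x * y) = v x + v y"
  using discrete_valuation unfolding discrete_valuation_def by blast

lemma val_add: "x \<noteq> 0 \<Longrightarrow> y \<noteq> 0 \<Longrightarrow> x + y \<noteq> 0 \<Longrightarrow> min (v x) (v y) \<le> v (x + y)"
  using discrete_valuation unfolding discrete_valuation_def by blast

lemma val_surj: "\<exists>x. x \<noteq> 0 \<and> v x = n"
  using discrete_valuation unfolding discrete_valuation_def by blast

lemma val_one [simp]: "v 1 = 0"
  using val_mult[of 1 1] by simp

lemma val_minus [simp]: "v (- x) = v x"
proof (cases "x = 0")
  case False
  have "v (-1) = 0"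
    using val_mult[of "-1" "-1"] by simp
  then show ?thesis
    using False val_mult[of "-1" x] by simp
qed simp

lemma val_inverse: "x \<noteq> 0 \<Longrightarrow> v (inverse x) = - v x"
  using val_mult[of x "inverse x"] by simp

lemma val_divide: "x \<noteq> 0 \<Longrightarrow> y \<noteq> 0 \<Longrightarrow> v (x / y) = v x - v y"
  by (simp add: divide_inverse val_mult val_inverse)

lemma val_power: "x \<noteq> 0 \<Longrightarrow> v (x ^ n) = int n * v x"
  by (induction n) (simp_all add: val_mult algebra_simps)

text \<open>The element 0 has valuation \<open>\<infinity>\<close>; the junk value \<open>v 0\<close> is never consulted.\<close>
definition val_ge :: "int \<Rightarrow> 'k \<Rightarrow> bool" where
  "val_ge n x \<longleftrightarrow> x = 0 \<or> n \<le> v x"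

lemma val_ge_zero [simp]: "val_ge n 0"
  by (simp add: val_ge_def)

lemma val_ge_minus [simp]: "val_ge n (- x) \<longleftrightarrow> val_ge n x"
  by (simp add: val_ge_def)

lemma val_ge_val: "val_ge (v x) x"
  by (simp add: val_ge_def)

lemma val_ge_one: "val_ge 0 1"
  by (simp add: val_ge_def)

lemma val_ge_mono: "val_ge n x \<Longrightarrow> m \<le> n \<Longrightarrow> val_ge m x"
  by (auto simp: val_ge_def)

lemma val_ge_add: "val_ge n x \<Longrightarrow> val_ge n y \<Longrightarrow> val_ge n (x + y)"
  unfolding val_ge_def using val_add[of x y] by (cases "x = 0"; cases "y = 0"; cases "x + y = 0") auto

lemma val_ge_diff: "val_ge n x \<Longrightarrow> val_ge n y \<Longrightarrow> val_ge n (x - y)"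
  using val_ge_add[of n x "- y"] by simp

lemma val_ge_mult: "val_ge n x \<Longrightarrow> val_ge m y \<Longrightarrow> val_ge (n + m) (x * y)"
  unfolding val_ge_def using val_mult[of x y] by (cases "x = 0"; cases "y = 0") auto

lemma val_ge_sum: "(\<And>i. i \<in> S \<Longrightarrow> val_ge n (f i)) \<Longrightarrow> val_ge n (sum f S)"
  by (induction S rule: infinite_finite_induct) (simp_all add: val_ge_add)

lemma val_ge_of_nat: "val_ge 0 (of_nat k)"
  by (induction k) (simp_all add: val_ge_add val_ge_one)

lemma val_ge_cancel: "c \<noteq> 0 \<Longrightarrow> val_ge n (c * y) \<Longrightarrow> val_ge (n - v c) y"
  unfolding val_ge_def by (cases "y = 0") (auto simp: val_mult)

lemma val_ge_all_imp_0: "(\<And>n. val_ge n x) \<Longrightarrow> x = 0"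
  unfolding val_ge_def by (metis add1_zle_eq linorder_not_less)

lemma mem_val_ring_iff: "x \<in> val_ring v \<longleftrightarrow> val_ge 0 x"
  by (simp add: val_ring_def val_ge_def)

lemma vclose_iff: "vclose v n x y \<longleftrightarrow> val_ge n (x - y)"
  by (simp add: vclose_def val_ge_def)

lemma positive_integer_in_maximal_ideal:
  assumes "finite_residue_field v"
  obtains m :: nat where "m \<ge> 1" and "val_ge 1 (of_nat m :: 'k)"
proof -
  obtain R where R: "finite R" "\<forall>x\<in>val_ring v. \<exists>r\<in>R. vclose v 1 x r"
    using assms unfolding finite_residue_field_def by blast
  define r where "r i = (SOME r. r \<in> R \<and> vclose v 1 (of_nat i) r)" for i :: nat
  have r: "r i \<in> R \<and> vclose v 1 (of_nat i) (r i)" for i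
    unfolding r_def using R(2) val_ge_of_nat mem_val_ring_iff by (metis (no_types, lifting) someI_ex)
  have "\<not> inj_on r {0..card R}"
  proof
    assume "inj_on r {0..card R}"
    then have "card {0..card R} \<le> card R"
      using R(1) r by (intro card_inj_on_le) auto
    then show False
      by simp
  qed
  then obtain i j where ij: "i < j" "r i = r j"
    unfolding inj_on_def by (metis linorder_neqE_nat)
  have "val_ge 1 ((of_nat j - r j) - (of_nat i - r i) :: 'k)"
    using r vclose_iff by (blast intro: val_ge_diff)
  then have "val_ge 1 (of_nat (j - i) :: 'k)"
    using ij by simp
  then show ?thesis
    using ij(1) by (intro that[of "j - i"]) auto
qed

definition mat_val_ge :: "int \<Rightarrow> 'k^'n^'m \<Rightarrow> bool" where
  "mat_val_ge n A \<longleftrightarrow> (\<forall>i j. val_ge n (A$i$j))"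

lemma mclose_iff: "mclose v n A B \<longleftrightarrow> mat_val_ge n (A - B)"
  by (simp add: mclose_def mat_val_ge_def vclose_iff)

lemma mat_val_ge_zero [simp]: "mat_val_ge n 0"
  by (simp add: mat_val_ge_def)

lemma mat_val_ge_minus [simp]: "mat_val_ge n (- A) \<longleftrightarrow> mat_val_ge n A"
  by (simp add: mat_val_ge_def)

lemma mat_val_ge_mono: "mat_val_ge n A \<Longrightarrow> m \<le> n \<Longrightarrow> mat_val_ge m A"
  by (auto simp: mat_val_ge_def intro: val_ge_mono)

lemma mat_val_ge_add: "mat_val_ge n A \<Longrightarrow> mat_val_ge n B \<Longrightarrow> mat_val_ge n (A + B)"
  by (simp add: mat_val_ge_def val_ge_add)

lemma mat_val_ge_mult:
  "mat_val_ge n A \<Longrightarrow> mat_val_ge m B \<Longrightarrow> mat_val_ge (n + m) (A ** B)"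
  unfolding mat_val_ge_def matrix_matrix_mult_def by (auto intro!: val_ge_sum val_ge_mult)

lemma mat_val_ge_mat: "val_ge n c \<Longrightarrow> mat_val_ge n (mat c :: 'k^'n^'n)"
  by (simp add: mat_val_ge_def mat_def)

lemma mat_val_ge_all_imp_0: "(\<And>n. mat_val_ge n A) \<Longrightarrow> A = 0"
  unfolding mat_val_ge_def by (simp add: vec_eq_iff val_ge_all_imp_0)

lemma mat_val_ge_exists: "\<exists>n. mat_val_ge n (A::'k^'n^'m)"
proof -
  define n where "n = Min (range (\<lambda>(i, j). v (A$i$j)))"
  have "n \<le> v (A$i$j)" for i j
    unfolding n_def by (rule Min_le) auto
  then have "val_ge n (A$i$j)" for i j
    using val_ge_mono[OF val_ge_val] by blast
  then show ?thesis
    unfolding mat_val_ge_def by blast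
qed

subsection \<open>Powers close to the identity\<close>

lemma matpow_one_plus_congruence:
  assumes "mat_val_ge n Y" and "0 \<le> n"
  shows "mat_val_ge (2 * n) (matpow (mat 1 + Y) m - mat 1 - mat (of_nat m) ** (Y::'k^2^2))"
proof (induction m)
  case (Suc m)
  define R where "R = matpow (mat 1 + Y) m - mat 1 - mat (of_nat m) ** Y"
  have "matpow (mat 1 + Y) (Suc m) - mat 1 - mat (of_nat (Suc m)) ** Y =
        mat (of_nat m) ** (Y ** Y) + R ** (mat 1 + Y)"
    by (simp add: R_def matrix2_simps algebra_simps)
  moreover have "mat_val_ge (0 + (n + n)) (mat (of_nat m) ** (Y ** Y))"
    using assms(1) by (intro mat_val_ge_mult mat_val_ge_mat val_ge_of_nat)
  moreover have "mat_val_ge 0 (mat 1 + Y)"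
    using mat_val_ge_mono[OF assms] by (intro mat_val_ge_add mat_val_ge_mat val_ge_one)
  then have "mat_val_ge (2 * n + 0) (R ** (mat 1 + Y))"
    using Suc.IH unfolding R_def by (rule mat_val_ge_mult[rotated])
  ultimately show ?case
    by (simp add: mat_val_ge_add)
qed simp

lemma matpow_one_plus_closer:
  assumes "val_ge 1 (of_nat m)" and "mat_val_ge n Y" and "1 \<le> n"
  shows "mat_val_ge (n + 1) (matpow (mat 1 + Y) m - mat 1 :: 'k^2^2)"
proof -
  have "mat_val_ge (1 + n) (mat (of_nat m) ** Y)"
    using assms by (intro mat_val_ge_mult mat_val_ge_mat)
  moreover have "mat_val_ge (n + 1) (matpow (mat 1 + Y) m - mat 1 - mat (of_nat m) ** Y)"
    using mat_val_ge_mono[OF matpow_one_plus_congruence[OF assms(2)]] assms(3) by simp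
  ultimately show ?thesis
    using mat_val_ge_add by (fastforce simp: add.commute)
qed

lemma matpow_power_closer:
  assumes "val_ge 1 (of_nat m)" and "mat_val_ge n (x - mat 1)" and "1 \<le> n"
  shows "mat_val_ge (n + int k) (matpow (x::'k^2^2) (m ^ k) - mat 1)"
proof (induction k)
  case (Suc k)
  have "matpow x (m ^ Suc k) = matpow (mat 1 + (matpow x (m ^ k) - mat 1)) m"
    by (simp add: matpow_mult[symmetric] mult.commute)
  moreover have "mat_val_ge (n + int k + 1) (matpow (mat 1 + (matpow x (m ^ k) - mat 1)) m - mat 1)"
    using Suc assms by (intro matpow_one_plus_closer) auto
  ultimately show ?case
    by (simp add: ac_simps)
qed (use assms in simp)

lemma matpow_one_plus_eq_one_imp_0:
  assumes "of_nat m \<noteq> (0::'k)" and "v (of_nat m) < n" and "0 \<le> n"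
    and "mat_val_ge n Y" and "matpow (mat 1 + Y) m = mat 1"
  shows "Y = (0::'k^2^2)"
proof -
  \<comment> \<open>m Y is minus the terms of order Y^2, so if the entries of Y have valuation \<ge> k,
    they even have valuation \<ge> 2 k - v m > k.\<close>
  have deep: "mat_val_ge k Y" if "n \<le> k" for k
    using that
  proof (induction k rule: int_ge_induct)
    case (step k)
    have "mat_val_ge (2 * k) (matpow (mat 1 + Y) m - mat 1 - mat (of_nat m) ** Y)"
      using matpow_one_plus_congruence[OF step.IH] step.hyps assms(3) by simp
    then have "mat_val_ge (2 * k) (mat (of_nat m) ** Y)"
      using assms(5) by simp
    then have "val_ge (2 * k - v (of_nat m)) (Y$i$j)" for i j
      using assms(1) val_ge_cancel by (metis mat_val_ge_def mat_mult_component)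
    moreover have "k + 1 \<le> 2 * k - v (of_nat m)"
      using step.hyps assms(2) by simp
    ultimately show ?case
      unfolding mat_val_ge_def by (blast intro: val_ge_mono)
  qed (use assms(4) in simp)
  have "mat_val_ge k Y" for k
    using mat_val_ge_mono[OF deep[of "max n k"]] by simp
  then show ?thesis
    by (rule mat_val_ge_all_imp_0)
qed

lemma matpow_power_eq_one_imp_one:
  assumes "of_nat m \<noteq> (0::'k)" and "val_ge 1 (of_nat m)" and "v (of_nat m) < n"
  shows "mat_val_ge n (x - mat 1) \<Longrightarrow> matpow x (m ^ k) = mat 1 \<Longrightarrow> x = (mat 1::'k^2^2)"
proof (induction k arbitrary: x)
  case (Suc k)
  have n: "2 \<le> n"
    using assms by (simp add: val_ge_def)
  have "mat_val_ge (n + 1) (matpow (mat 1 + (x - mat 1)) m - mat 1)"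
    using Suc.prems(1) assms(2) n by (intro matpow_one_plus_closer) auto
  then have "mat_val_ge n (matpow x m - mat 1)"
    by (auto elim: mat_val_ge_mono)
  moreover have "matpow (matpow x m) (m ^ k) = mat 1"
    using Suc.prems(2) by (simp add: matpow_mult[symmetric])
  ultimately have "matpow (mat 1 + (x - mat 1)) m = mat 1"
    using Suc.IH by simp
  then have "x - mat 1 = 0"
    using Suc.prems(1) assms(1,3) n by (intro matpow_one_plus_eq_one_imp_0) auto
  then show ?case
    by simp
qed simp

subsection \<open>The end of the tree defined by a line\<close>

definition span_lattice :: "'k^2 \<Rightarrow> 'k^2 \<Rightarrow> ('k^2) set" where
  "span_lattice e f = {a *s e + b *s f | a b. a \<in> val_ring v \<and> b \<in> val_ring v}"

lemma mem_span_lattice: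
  "x \<in> span_lattice e f \<longleftrightarrow> (\<exists>a b. val_ge 0 a \<and> val_ge 0 b \<and> x = a *s e + b *s f)"
  unfolding span_lattice_def mem_val_ring_iff by blast

lemma lattice_span_lattice: "det2 e f \<noteq> 0 \<Longrightarrow> lattice v (span_lattice e f)"
  unfolding lattice_def span_lattice_def det2_def by blast

lemma span_lattice_left: "e \<in> span_lattice e f"
  unfolding mem_span_lattice by (intro exI[of _ 1] exI[of _ 0]) (simp add: val_ge_one)

lemma span_lattice_right: "f \<in> span_lattice e f"
  unfolding mem_span_lattice by (intro exI[of _ 0] exI[of _ 1]) (simp add: val_ge_one)

lemma span_lattice_subset:
  assumes "e' \<in> span_lattice e f" and "f' \<in> span_lattice e f"
  shows "span_lattice e' f' \<subseteq> span_lattice e f"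
proof
  fix x
  assume "x \<in> span_lattice e' f'"
  then obtain a b where ab: "val_ge 0 a" "val_ge 0 b" "x = a *s e' + b *s f'"
    unfolding mem_span_lattice by blast
  obtain a1 b1 where 1: "val_ge 0 a1" "val_ge 0 b1" "e' = a1 *s e + b1 *s f"
    using assms(1) unfolding mem_span_lattice by blast
  obtain a2 b2 where 2: "val_ge 0 a2" "val_ge 0 b2" "f' = a2 *s e + b2 *s f"
    using assms(2) unfolding mem_span_lattice by blast
  have "x = (a * a1 + b * a2) *s e + (a * b1 + b * b2) *s f"
    using ab(3) 1(3) 2(3) by (simp add: vec2_eq_iff algebra_simps)
  moreover have "val_ge 0 (a * a1 + b * a2)" "val_ge 0 (a * b1 + b * b2)"
    using ab 1 2 val_ge_mult[of 0 _ 0] by (auto intro!: val_ge_add)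
  ultimately show "x \<in> span_lattice e f"
    unfolding mem_span_lattice by blast
qed

lemma span_lattice_image:
  assumes "\<And>a b. h (a *s e + b *s f) = a *s h e + b *s h f"
  shows "h ` span_lattice e f = span_lattice (h e) (h f)"
proof (intro equalityI subsetI)
  fix y
  assume "y \<in> h ` span_lattice e f"
  then show "y \<in> span_lattice (h e) (h f)"
    unfolding span_lattice_def using assms by auto
next
  fix y
  assume "y \<in> span_lattice (h e) (h f)"
  then obtain a b where "a \<in> val_ring v" "b \<in> val_ring v" "y = h (a *s e + b *s f)"
    unfolding span_lattice_def assms by blast
  then show "y \<in> h ` span_lattice e f"
    unfolding span_lattice_def by blast
qed

lemma span_lattice_scale: "(\<lambda>x. c *s x) ` span_lattice e f = span_lattice (c *s e) (c *s f)"
  by (rule span_lattice_image) (simp add: vec2_eq_iff algebra_simps)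

lemma act_span_lattice: "act g (span_lattice e f) = span_lattice (g *v e) (g *v f)"
  unfolding act_def by (rule span_lattice_image) (simp add: vec2_eq_iff matrix_vector_mult_2 algebra_simps)

lemma span_lattice_shear:
  assumes "val_ge 0 s" and "u \<noteq> 0" and "v u = 0"
  shows "span_lattice e (s *s e + u *s f) = span_lattice e f"
proof
  have "val_ge 0 u"
    using assms(3) by (simp add: val_ge_def)
  then have "s *s e + u *s f \<in> span_lattice e f"
    unfolding mem_span_lattice using assms(1) by blast
  then show "span_lattice e (s *s e + u *s f) \<subseteq> span_lattice e f"
    by (intro span_lattice_subset span_lattice_left)
  have "f = (- s * inverse u) *s e + inverse u *s (s *s e + u *s f)"
    using assms(2) by (simp add: vec2_eq_iff algebra_simps)
  moreover have "val_ge 0 (- s * inverse u)" "val_ge 0 (inverse u)"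
    using assms val_ge_mult[of 0 "- s" 0 "inverse u"] by (simp_all add: val_ge_def val_inverse)
  ultimately have "f \<in> span_lattice e (s *s e + u *s f)"
    unfolding mem_span_lattice by blast
  then show "span_lattice e f \<subseteq> span_lattice e (s *s e + u *s f)"
    by (intro span_lattice_subset span_lattice_left)
qed

lemma uniformiser_not_unit:
  assumes "v p = 1" and "val_ge 0 a"
  shows "a * p \<noteq> 1"
proof
  assume ap: "a * p = 1"
  then have "a \<noteq> 0" "p \<noteq> 0"
    by auto
  then have "v a + 1 = 0"
    using ap val_mult[of a p] assms(1) by simp
  then show False
    using assms(2) \<open>a \<noteq> 0\<close> by (simp add: val_ge_def)
qed

lemma adjacent_span_lattice:
  assumes "det2 e f \<noteq> 0" and "p \<noteq> 0" and "v p = 1"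
  shows "adjacent v (span_lattice e f) (span_lattice e (p *s f))"
proof -
  have p: "val_ge 0 p"
    using assms by (simp add: val_ge_def)
  have "p *s e \<in> span_lattice e (p *s f)"
    unfolding mem_span_lattice using p by (intro exI[of _ p] exI[of _ 0]) simp
  then have "(\<lambda>x. p *s x) ` span_lattice e f \<subseteq> span_lattice e (p *s f)"
    unfolding span_lattice_scale by (intro span_lattice_subset span_lattice_right)
  moreover have "e \<notin> (\<lambda>x. p *s x) ` span_lattice e f"
  proof
    assume "e \<in> (\<lambda>x. p *s x) ` span_lattice e f"
    then obtain a b where "val_ge 0 a" "1 *s e + 0 *s f = (a * p) *s e + (b * p) *s f"
      unfolding span_lattice_scale mem_span_lattice by (auto simp: vec2_eq_iff algebra_simps)
    then show False
      using det2_nonzero_coords_unique(1)[OF assms(1)] uniformiser_not_unit[OF assms(3)] by metis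
  qed
  moreover have "p *s f \<in> span_lattice e f"
    unfolding mem_span_lattice using p by (intro exI[of _ 0] exI[of _ p]) simp
  then have "span_lattice e (p *s f) \<subseteq> span_lattice e f"
    by (intro span_lattice_subset span_lattice_left)
  moreover have "f \<notin> span_lattice e (p *s f)"
  proof
    assume "f \<in> span_lattice e (p *s f)"
    then obtain a b where "val_ge 0 b" "0 *s e + 1 *s f = a *s e + (b * p) *s f"
      unfolding mem_span_lattice by (auto simp: vec2_eq_iff algebra_simps)
    then show False
      using det2_nonzero_coords_unique(2)[OF assms(1)] uniformiser_not_unit[OF assms(3)] by metis
  qed
  moreover have "det2 e (p *s f) \<noteq> 0"
    using assms by (simp add: det2_smult_right)
  moreover have "homothetic (span_lattice e (p *s f)) (span_lattice e (p *s f))"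
    unfolding homothetic_def by (intro exI[of _ 1]) simp
  ultimately show ?thesis
    unfolding adjacent_def using assms span_lattice_left span_lattice_right lattice_span_lattice
    by blast
qed

lemma not_homothetic_span_lattice:
  assumes "det2 e f \<noteq> 0" and "p \<noteq> 0" and "v p = 1"
  shows "\<not> homothetic (span_lattice e f) (span_lattice e (p *s (p *s f)))"
proof
  assume "homothetic (span_lattice e f) (span_lattice e (p *s (p *s f)))"
  then obtain c where c: "c \<noteq> 0" "span_lattice e (p *s (p *s f)) = span_lattice (c *s e) (c *s f)"
    unfolding homothetic_def span_lattice_scale by blast
  \<comment> \<open>e lies in c (O e + O f) only if v c \<le> 0, while c f lies in O e + p^2 O f only if v c \<ge> 2.\<close>
  have "e \<in> span_lattice (c *s e) (c *s f)"
    using c span_lattice_left by metis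
  then obtain a b where a: "val_ge 0 a" "1 *s e + 0 *s f = (a * c) *s e + (b * c) *s f"
    unfolding mem_span_lattice by (auto simp: vec2_eq_iff algebra_simps)
  then have "a * c = 1"
    using det2_nonzero_coords_unique(1)[OF assms(1)] by metis
  then have "v a + v c = 0"
    using val_mult[of a c] by (metis mult_eq_0_iff val_one zero_neq_one)
  then have "v c \<le> 0"
    using a(1) \<open>a * c = 1\<close> by (auto simp: val_ge_def)
  have "c *s f \<in> span_lattice e (p *s (p *s f))"
    using c span_lattice_right by metis
  then obtain a' b' where b': "val_ge 0 b'" "0 *s e + c *s f = a' *s e + (b' * p * p) *s f"
    unfolding mem_span_lattice by (auto simp: vec2_eq_iff algebra_simps)
  then have "b' * p * p = c"
    using det2_nonzero_coords_unique(2)[OF assms(1)] by metis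
  then have "v c = v b' + 2"
    using c(1) assms(2,3) val_mult by (metis mult_eq_0_iff one_add_one add.assoc)
  then show False
    using \<open>v c \<le> 0\<close> b'(1) \<open>b' * p * p = c\<close> c(1) by (auto simp: val_ge_def)
qed

text \<open>The lattices \<open>O e + p^n O f\<close> run along the ray towards the end of \<open>T\<^sub>K\<close> defined by the
  line \<open>K e\<close>.\<close>
definition line_ray :: "'k^2 \<Rightarrow> 'k^2 \<Rightarrow> 'k \<Rightarrow> nat \<Rightarrow> ('k^2) set" where
  "line_ray e f p n = span_lattice e (p ^ n *s f)"

lemma ray_line_ray:
  assumes "det2 e f \<noteq> 0" and "p \<noteq> 0" and "v p = 1"
  shows "ray v (line_ray e f p)"
  unfolding ray_def
proof
  fix n
  have "det2 e (p ^ n *s f) \<noteq> 0"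
    using assms by (simp add: det2_smult_right)
  moreover have "line_ray e f p (Suc n) = span_lattice e (p *s (p ^ n *s f))"
    "line_ray e f p (Suc (Suc n)) = span_lattice e (p *s (p *s (p ^ n *s f)))"
    by (simp_all add: line_ray_def vector_smult_assoc)
  ultimately show "adjacent v (line_ray e f p n) (line_ray e f p (Suc n)) \<and>
      \<not> homothetic (line_ray e f p n) (line_ray e f p (Suc (Suc n)))"
    using adjacent_span_lattice not_homothetic_span_lattice assms(2,3)
    by (simp only: line_ray_def[of e f p n]) blast
qed

lemma same_end_line_ray:
  assumes "det2 e f \<noteq> 0" and "p \<noteq> 0" and "v p = 1" and "det g = 1" and "g *v e = l *s e"
  shows "same_end (\<lambda>n. act g (line_ray e f p n)) (line_ray e f p)"
proof -
  obtain k m where km: "g *v f = k *s e + m *s f"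
    using det2_nonzero_spans[OF assms(1)] by blast
  have "l * m * det2 e f = det2 e f"
    using det2_matrix_vector_mult[of g e f] assms(4,5) km by (simp add: det2_def algebra_simps)
  then have lm: "m * l = 1"
    using assms(1) by (simp add: mult.commute)
  then have m: "m \<noteq> 0"
    by auto
  define A where "A = nat (\<bar>2 * v m\<bar> + \<bar>v (m * k)\<bar>)"
  define B where "B = nat (int A + 2 * v m)"
  have B: "int B = int A + 2 * v m"
    unfolding A_def B_def by simp
  \<comment> \<open>Up to the scalar m, g maps the lattice at distance n + A to the one at distance n + B.\<close>
  have "homothetic (act g (line_ray e f p (n + A))) (line_ray e f p (n + B))" for n
  proof -
    define s where "s = m * k * p ^ (n + A)"
    define u where "u = m * m * p ^ (n + A) / p ^ (n + B)"
    have u: "u \<noteq> 0" "v u = 0"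
      using m assms(2,3) B by (simp_all add: u_def val_divide val_mult val_power)
    have s: "val_ge 0 s"
    proof (cases "m * k = 0")
      case False
      then have "v s = v (m * k) + int (n + A)"
        using assms(2,3) by (simp add: s_def val_mult val_power)
      moreover have "0 \<le> v (m * k) + int (n + A)"
        unfolding A_def by (simp add: abs_if)
      ultimately show ?thesis
        by (simp add: val_ge_def)
    qed (auto simp: s_def)
    have "m *s (p ^ (n + A) *s (k *s e + m *s f)) = s *s e + u *s (p ^ (n + B) *s f)"
      using assms(2) by (simp add: s_def u_def vec2_eq_iff algebra_simps)
    moreover have "m *s (l *s e) = e"
      using lm by (simp add: vector_smult_assoc)
    ultimately have "(\<lambda>x. m *s x) ` act g (line_ray e f p (n + A)) =
        span_lattice e (s *s e + u *s (p ^ (n + B) *s f))"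
      by (simp add: line_ray_def act_span_lattice span_lattice_scale vector_scalar_commute km assms(5))
    also have "\<dots> = line_ray e f p (n + B)"
      unfolding line_ray_def using s u by (rule span_lattice_shear)
    finally show ?thesis
      unfolding homothetic_def using m by blast
  qed
  then show ?thesis
    unfolding same_end_def by blast
qed

lemma stabilises_end_if_invariant_line:
  assumes "e \<noteq> 0" and "\<forall>g\<in>G. det g = 1 \<and> (\<exists>l. g *v e = l *s e)"
  shows "stabilises_end v G"
proof -
  obtain f where f: "det2 e f \<noteq> 0"
    using det2_complement_exists assms(1) by blast
  obtain p where p: "p \<noteq> 0" "v p = 1"
    using val_surj by blast
  have "same_end (\<lambda>n. act g (line_ray e f p n)) (line_ray e f p)" if "g \<in> G" for g
    using assms(2) that same_end_line_ray[OF f p] by blast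
  then show ?thesis
    unfolding stabilises_end_def using ray_line_ray[OF f p] by (intro exI[of _ "line_ray e f p"]) blast
qed

subsection \<open>Non-discrete groups with discrete cyclic subgroups\<close>

lemma mat_val_ge_product_minus_one:
  assumes "mat_val_ge n (x - mat 1)" and "mat_val_ge n (y - mat 1)" and "0 \<le> n"
  shows "mat_val_ge n (x ** y - mat 1 :: 'k^'n^'n)"
proof -
  have "mat_val_ge (n + n) ((x - mat 1) ** (y - mat 1))"
    using assms(1,2) by (rule mat_val_ge_mult)
  then have "mat_val_ge n ((x - mat 1) + (y - mat 1) + (x - mat 1) ** (y - mat 1))"
    using assms by (intro mat_val_ge_add) (auto elim: mat_val_ge_mono)
  then show ?thesis
    by (subst product_minus_one)
qed

lemma nondiscrete_near_one:
  assumes "sl2_subgroup G" and "\<not> discrete_subgroup v G"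
  obtains x where "x \<in> G" and "x \<noteq> mat 1" and "mat_val_ge n (x - mat 1)"
proof -
  obtain g where g: "g \<in> G" "\<forall>n. \<exists>h\<in>G. mat_val_ge n (h - g) \<and> h \<noteq> g"
    using assms(2) unfolding discrete_subgroup_def mclose_iff by blast
  obtain g' where g': "g' \<in> G" "g ** g' = mat 1" "g' ** g = mat 1"
    using sl2_subgroup_inverse[OF assms(1) g(1)] by blast
  obtain b where b: "mat_val_ge b g'"
    using mat_val_ge_exists by blast
  obtain h where h: "h \<in> G" "mat_val_ge (n - b) (h - g)" "h \<noteq> g"
    using g(2) by blast
  have "mat_val_ge (n - b + b) ((h - g) ** g')"
    using h(2) b by (rule mat_val_ge_mult)
  moreover have "h ** g' - mat 1 = (h - g) ** g'"
    using g'(2) by (simp add: matrix_diff_rdistrib)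
  ultimately have "mat_val_ge n (h ** g' - mat 1)"
    by simp
  moreover have "h ** g' \<noteq> mat 1"
    using g'(3) h(3) by (metis matrix_mul_assoc matrix_mul_lid matrix_mul_rid)
  moreover have "h ** g' \<in> G"
    using assms(1) h(1) g'(1) by (rule sl2_subgroup_mult)
  ultimately show ?thesis
    using that by blast
qed

lemma near_one_torsion:
  assumes "discrete_subgroup v (gen_subgroup {x, x})" and "val_ge 1 (of_nat m)"
    and "mat_val_ge 1 (x - mat 1)"
  obtains k where "matpow x (m ^ k) = (mat 1 :: 'k^2^2)"
proof -
  obtain n where n: "\<forall>h\<in>gen_subgroup {x, x}. mat_val_ge n (h - mat 1) \<longrightarrow> h = mat 1"
    using assms(1) one_mem_gen_subgroup unfolding discrete_subgroup_def mclose_iff by blast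
  have "mat_val_ge (1 + int (nat n)) (matpow x (m ^ nat n) - mat 1)"
    using assms(2,3) by (rule matpow_power_closer) simp
  then have "mat_val_ge n (matpow x (m ^ nat n) - mat 1)"
    by (rule mat_val_ge_mono) simp
  then show ?thesis
    using n matpow_mem_gen_subgroup that by blast
qed

lemma discrete_if_cyclic_subgroups_discrete_char_0:
  assumes "sl2_subgroup G" and "\<forall>x\<in>G. discrete_subgroup v (gen_subgroup {x, x})"
    and "val_ge 1 (of_nat m)" and "of_nat m \<noteq> (0::'k)"
  shows "discrete_subgroup v G"
proof (rule ccontr)
  assume "\<not> discrete_subgroup v G"
  then obtain x where x: "x \<in> G" "x \<noteq> mat 1" "mat_val_ge (v (of_nat m) + 1) (x - mat 1)"
    using nondiscrete_near_one assms(1) by blast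
  have "1 \<le> v (of_nat m)"
    using assms(3,4) by (simp add: val_ge_def)
  then have "mat_val_ge 1 (x - mat 1)"
    using x(3) by (auto elim: mat_val_ge_mono)
  then obtain k where "matpow x (m ^ k) = mat 1"
    using near_one_torsion assms(2,3) x(1) by blast
  then have "x = mat 1"
    using matpow_power_eq_one_imp_one[OF assms(4,3), of "v (of_nat m) + 1"] x(3) by simp
  then show False
    using x(2) by simp
qed

lemma near_one_unipotent_char_p:
  assumes "prime p" and "of_nat p = (0::'k)"
    and "discrete_subgroup v (gen_subgroup {x, x})" and "mat_val_ge 1 (x - mat 1)"
  shows "unipotent x"
proof -
  have "val_ge 1 (of_nat p :: 'k)"
    using assms(2) by simp
  then obtain k where "matpow x (p ^ k) = mat 1"
    using near_one_torsion[OF assms(3) _ assms(4)] by blast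
  then have "matpow (x - mat 1) (p ^ k) = 0"
    using matpow_one_plus_prime_power[OF assms(1,2), of "x - mat 1" k] by simp
  then show ?thesis
    unfolding unipotent_def by (rule matpow_nilpotent_imp_square_zero)
qed

lemma near_one_common_fixed_vector:
  assumes "sl2_subgroup G" and "\<not> discrete_subgroup v G"
    and "\<forall>x\<in>G. mat_val_ge 1 (x - mat 1) \<longrightarrow> unipotent x"
  obtains e where "e \<noteq> 0" and "\<forall>x\<in>G. mat_val_ge 1 (x - mat 1) \<longrightarrow> (x - mat 1) *v e = 0"
proof -
  obtain x0 where x0: "x0 \<in> G" "x0 \<noteq> mat 1" "mat_val_ge 1 (x0 - mat 1)"
    using nondiscrete_near_one assms(1,2) by blast
  then have "unipotent x0"
    using assms(3) by blast
  then obtain e where e: "e \<noteq> 0" "(x0 - mat 1) *v e = 0"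
    using square_zero_kernel_exists x0(2) unfolding unipotent_def by (metis right_minus_eq)
  have "(x - mat 1) *v e = 0" if "x \<in> G" "mat_val_ge 1 (x - mat 1)" for x
  proof (rule unipotent_common_fixed_vector[OF x0(2) \<open>unipotent x0\<close> _ _ e(2)])
    show "unipotent x"
      using assms(3) that by blast
    have "mat_val_ge 1 (x0 ** x - mat 1)"
      using x0(3) that(2) by (rule mat_val_ge_product_minus_one) simp
    then show "unipotent (x0 ** x)"
      using assms(1,3) x0(1) that(1) sl2_subgroup_mult by blast
  qed
  then show ?thesis
    using that e(1) by blast
qed

lemma near_one_fixed_line_invariant:
  assumes "sl2_subgroup G" and "\<not> discrete_subgroup v G" and "e \<noteq> 0"
    and "\<forall>x\<in>G. mat_val_ge 1 (x - mat 1) \<longrightarrow> (x - mat 1) *v e = 0" and "g \<in> G"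
  shows "\<exists>l. g *v e = l *s e"
proof -
  obtain h where h: "h \<in> G" "g ** h = mat 1" "h ** g = mat 1"
    using sl2_subgroup_inverse assms(1,5) by blast
  obtain b1 b2 where "mat_val_ge b1 g" "mat_val_ge b2 h"
    using mat_val_ge_exists by blast
  define b where "b = min (min b1 b2) 0"
  have b: "mat_val_ge b g" "mat_val_ge b h" "b \<le> 0"
    unfolding b_def using \<open>mat_val_ge b1 g\<close> \<open>mat_val_ge b2 h\<close> by (auto elim: mat_val_ge_mono)
  \<comment> \<open>Taking x close enough to 1 makes its conjugate by g close to 1 as well.\<close>
  obtain x where x: "x \<in> G" "x \<noteq> mat 1" "mat_val_ge (1 - 2 * b) (x - mat 1)"
    using nondiscrete_near_one assms(1,2) by blast
  have x1: "mat_val_ge 1 (x - mat 1)"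
    using mat_val_ge_mono[OF x(3)] b(3) by simp
  have "mat_val_ge (b + (1 - 2 * b) + b) (h ** (x - mat 1) ** g)"
    using b x(3) by (intro mat_val_ge_mult)
  then have "mat_val_ge 1 (h ** x ** g - mat 1)"
    using conjugate_minus_one[OF h(3)] by simp
  moreover have "h ** x ** g \<in> G"
    using assms(1,5) h(1) x(1) by (intro sl2_subgroup_mult)
  ultimately have "(h ** (x - mat 1) ** g) *v e = 0"
    using assms(4) conjugate_minus_one[OF h(3)] by metis
  then have "(x - mat 1) *v (g *v e) = 0"
    using h(2) by (metis matrix_mul_assoc matrix_mul_lid matrix_vector_mul_assoc matrix_vector_mult_0_right)
  moreover have "(x - mat 1) *v e = 0"
    using assms(4) x(1) x1 by blast
  ultimately show ?thesis
    using kernel_parallel x(2) assms(3) by (metis right_minus_eq)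
qed

lemma nondiscrete_stabilises_end_char_p:
  assumes "sl2_subgroup G" and "\<forall>x\<in>G. discrete_subgroup v (gen_subgroup {x, x})"
    and "\<not> discrete_subgroup v G" and "prime p" and "of_nat p = (0::'k)"
  shows "stabilises_end v G"
proof -
  have "\<forall>x\<in>G. mat_val_ge 1 (x - mat 1) \<longrightarrow> unipotent x"
    using near_one_unipotent_char_p assms(2,4,5) by blast
  then obtain e where e: "e \<noteq> 0" "\<forall>x\<in>G. mat_val_ge 1 (x - mat 1) \<longrightarrow> (x - mat 1) *v e = 0"
    using near_one_common_fixed_vector assms(1,3) by blast
  then have "\<forall>g\<in>G. det g = 1 \<and> (\<exists>l. g *v e = l *s e)"
    using near_one_fixed_line_invariant assms(1,3) sl2_subgroup_det by blast
  then show ?thesis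
    by (rule stabilises_end_if_invariant_line[OF e(1)])
qed

lemma discrete_or_stabilises_end:
  assumes "finite_residue_field v" and "sl2_subgroup G"
    and "\<forall>x\<in>G. discrete_subgroup v (gen_subgroup {x, x})"
  shows "discrete_subgroup v G \<or> stabilises_end v G"
proof -
  obtain m :: nat where m: "m \<ge> 1" "val_ge 1 (of_nat m :: 'k)"
    using positive_integer_in_maximal_ideal assms(1) by blast
  show ?thesis
  proof (cases "of_nat m = (0::'k)")
    case False
    then show ?thesis
      using discrete_if_cyclic_subgroups_discrete_char_0 assms(2,3) m(2) by blast
  next
    case True
    then have "prime CHAR('k)"
      using m(1) CHAR_pos_iff prime_CHAR_semidom by (metis less_le_trans zero_less_one)
    then show ?thesis
      using nondiscrete_stabilises_end_char_p[OF assms(2,3)] of_nat_CHAR by blast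
  qed
qed

end

theorem proposition1p3:
  fixes v :: "'k::field \<Rightarrow> int" and G :: "('k^2^2) set"
  assumes "nonarch_local_field v"
    and "sl2_subgroup G"
    and "\<not> elementary v G"
  shows "discrete_subgroup v G \<longleftrightarrow>
           (\<forall>g\<in>G. \<forall>h\<in>G. discrete_subgroup v (gen_subgroup {g, h}))"
proof
  assume "discrete_subgroup v G"
  then show "\<forall>g\<in>G. \<forall>h\<in>G. discrete_subgroup v (gen_subgroup {g, h})"
    using gen_subgroup_least[OF assms(2)] discrete_subgroup_subset by (meson empty_subsetI insert_subset)
next
  assume "\<forall>g\<in>G. \<forall>h\<in>G. discrete_subgroup v (gen_subgroup {g, h})"
  then have "\<forall>x\<in>G. discrete_subgroup v (gen_subgroup {x, x})"
    by blast
  moreover have "discrete_valued_field v" and "finite_residue_field v"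
    using assms(1) by (simp_all add: nonarch_local_field_def discrete_valued_field_def)
  ultimately show "discrete_subgroup v G"
    using discrete_valued_field.discrete_or_stabilises_end assms(2,3) unfolding elementary_def by blast
qed

end
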